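(* Let $n\ge 1$ and let $a_1,\dots,a_n>0$. Then, as formal power series in $z$ (with coefficients polynomials in $t$), \[ \Theta_n(z,t)=\prod_{m=1}^{n}\Big(1+\frac{a_m z}{1-a_m z t}\Big) =\exp\Big(\sum_{j=1}^{\infty}\frac{z^j}{j}\,A_n(j)\,\big(t^j-(t-1)^j\big)\Big). \] Moreover, if $t\neq 0$ and $a_1,\dots,a_n$ are pairwise distinct, then, as an identity of rational functions in $z$, \[ \Theta_n(z,t)=\frac{(t-1)^n}{t^n}+(-1)^n\sum_{j=1}^{n}\frac{\prod_{m=1}^{n}\big(\frac{1-t}{a_j t}+\frac1{a_m}\big)}{\prod_{\ell=1,\ell\ne j}^{n}\big(\frac1{a_j}-\frac1{a_\ell}\big)}\cdot\frac{1}{zt-\frac1{a_j}}. \]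
   Context: Let $\boldsymbol a=(a_j)_{j\ge1}$ be a sequence of positive reals. For integers $n\ge1$, $k\ge0$ let $\mathcal M_{n,k}=\{(\ell_1,\dots,\ell_k)\in\mathbb N^k: n\ge\ell_1\ge\ell_2\ge\cdots\ge\ell_k\ge1\}$ (the $k$-multisets of $\{1,\dots,n\}$ written as non-increasing sequences). For $\vec\ell\in\mathcal M_{n,k}$ let $\sigma(\vec\ell)=|\{1\le j\le k-1:\ell_j=\ell_{j+1}\}|$ and $w(\vec\ell)=\prod_{j=1}^k a_{\ell_j}$. Define the polynomial $\theta_{n;k}(t)=\sum_{\vec\ell\in\mathcal M_{n,k}}w(\vec\ell)\,t^{\sigma(\vec\ell)}$ (with $\theta_{n;0}(t)=1$), the generating function $\Theta_n(z,t)=\sum_{k\ge0}\theta_{n;k}(t)z^k$, and the power sums $A_n(j)=\sum_{m=1}^n a_m^j$. *)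

theory Defs
  imports "HOL-Computational_Algebra.Formal_Power_Series"
begin

text \<open>k-multisets of {1..n}, written as non-increasing sequences (lists of length k).\<close>
definition multisets_seq :: "nat \<Rightarrow> nat \<Rightarrow> nat list set" where
  "multisets_seq n k = {ls. length ls = k \<and> sorted_wrt (\<ge>) ls \<and> set ls \<subseteq> {1..n}}"

text \<open>sigma: number of positions j (1 <= j <= k-1) with l_j = l_(j+1) (0-based here).\<close>
definition sigma_eq :: "nat list \<Rightarrow> nat" where
  "sigma_eq ls = card {j. Suc j < length ls \<and> ls ! j = ls ! Suc j}"

definition weight :: "(nat \<Rightarrow> real) \<Rightarrow> nat list \<Rightarrow> real" where
  "weight a ls = prod_list (map a ls)"

definition theta :: "(nat \<Rightarrow> real) \<Rightarrow> nat \<Rightarrow> nat \<Rightarrow> real \<Rightarrow> real" where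
  "theta a n k t = (\<Sum>ls\<in>multisets_seq n k. weight a ls * t ^ sigma_eq ls)"

definition Theta :: "(nat \<Rightarrow> real) \<Rightarrow> nat \<Rightarrow> real \<Rightarrow> real fps" where
  "Theta a n t = Abs_fps (\<lambda>k. theta a n k t)"

definition powsum :: "(nat \<Rightarrow> real) \<Rightarrow> nat \<Rightarrow> nat \<Rightarrow> real" where
  "powsum a n j = (\<Sum>m=1..n. a m ^ j)"

end

theory Submission
  imports Defs "HOL-Computational_Algebra.Polynomial_FPS"
begin

text \<open>
  The multisets of \<open>{1..n+1}\<close> that contain \<open>n+1\<close> start with \<open>n+1\<close>; removing that head shows
  that their contribution \<open>T k\<close> satisfies \<open>T (k+1) = a (t T k + \<theta> n k)\<close> with \<open>a = a (n+1)\<close>.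
  Hence adjoining the letter \<open>n+1\<close> multiplies \<open>\<Theta>\<close> by
  \<open>1 + a z/(1 - a t z) = (1 - a (t-1) z)/(1 - a t z)\<close>, whose logarithmic derivative is
  \<open>a t/(1 - a t z) - a (t-1)/(1 - a (t-1) z)\<close>. Summed over the letters this is the derivative
  of the exponent \<open>L\<close>, and \<open>Y' = Y L'\<close>, \<open>Y(0) = 1\<close> forces \<open>Y = exp L\<close>.
  For the partial fractions, clear the common denominator \<open>\<Prod>m. 1 - a m t z\<close>: both numerators
  are polynomials of degree at most \<open>n\<close> with the same coefficient of \<open>z^n\<close>, and they agree at
  the \<open>n\<close> distinct points \<open>z = 1/(a j t)\<close>.
\<close>

unbundle fps_syntax

lemma finite_multisets_seq: "finite (multisets_seq n k)"
proof -
  have "multisets_seq n k \<subseteq> {xs. set xs \<subseteq> {1..n} \<and> length xs = k}"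
    by (auto simp: multisets_seq_def)
  then show ?thesis
    by (rule finite_subset) (simp add: finite_lists_length_eq)
qed

lemma multisets_seq_0_left: "multisets_seq 0 k = (if k = 0 then {[]} else {})"
  by (auto simp: multisets_seq_def)

lemma multisets_seq_0_right: "multisets_seq n 0 = {[]}"
  by (auto simp: multisets_seq_def)

lemma sigma_eq_Nil [simp]: "sigma_eq [] = 0"
  by (simp add: sigma_eq_def)

lemma sigma_eq_Cons:
  "sigma_eq (x # xs) = sigma_eq xs + (if xs \<noteq> [] \<and> hd xs = x then 1 else 0)"
proof -
  define S where "S = {j. Suc j < length xs \<and> xs ! j = xs ! Suc j}"
  have "finite S"
    unfolding S_def by (rule finite_subset[of _ "{..<length xs}"]) auto
  have "{j. Suc j < length (x # xs) \<and> (x # xs) ! j = (x # xs) ! Suc j}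
      = (if xs \<noteq> [] \<and> hd xs = x then {0} else {}) \<union> Suc ` S"
  proof (intro set_eqI iffI)
    fix j assume "j \<in> {j. Suc j < length (x # xs) \<and> (x # xs) ! j = (x # xs) ! Suc j}"
    then show "j \<in> (if xs \<noteq> [] \<and> hd xs = x then {0} else {}) \<union> Suc ` S"
      by (cases j) (auto simp: S_def hd_conv_nth)
  qed (auto simp: S_def hd_conv_nth split: if_splits)
  then have "sigma_eq (x # xs) = card ((if xs \<noteq> [] \<and> hd xs = x then {0} else {}) \<union> Suc ` S)"
    unfolding sigma_eq_def by simp
  also have "\<dots> = (if xs \<noteq> [] \<and> hd xs = x then 1 else 0) + card S"
    using \<open>finite S\<close> by (subst card_Un_disjoint) (auto simp: card_image)
  finally show ?thesis
    by (simp add: sigma_eq_def S_def)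
qed

lemma sum_multisets_seq_Suc:
  "(\<Sum>ls\<in>multisets_seq (Suc n) k. f ls) =
     (\<Sum>ls\<in>{ls \<in> multisets_seq (Suc n) k. Suc n \<in> set ls}. f ls) + (\<Sum>ls\<in>multisets_seq n k. f ls)"
proof -
  have "multisets_seq (Suc n) k - {ls. Suc n \<in> set ls} = multisets_seq n k"
    unfolding multisets_seq_def by (auto simp: subset_iff le_Suc_eq)
  moreover have "multisets_seq (Suc n) k \<inter> {ls. Suc n \<in> set ls}
      = {ls \<in> multisets_seq (Suc n) k. Suc n \<in> set ls}"
    by blast
  ultimately show ?thesis
    using sum.Int_Diff[OF finite_multisets_seq, of f "Suc n" k "{ls. Suc n \<in> set ls}"] by simp
qed

text \<open>In a non-increasing sequence the largest letter can only occur at the front.\<close>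

lemma multisets_seq_Suc_containing_top:
  "{ls \<in> multisets_seq (Suc n) (Suc k). Suc n \<in> set ls} = (#) (Suc n) ` multisets_seq (Suc n) k"
proof (intro set_eqI iffI)
  fix ls assume "ls \<in> {ls \<in> multisets_seq (Suc n) (Suc k). Suc n \<in> set ls}"
  then obtain x xs where ls: "ls = x # xs" and "length xs = k"
    and sorted: "sorted_wrt (\<ge>) (x # xs)" and bounded: "set (x # xs) \<subseteq> {1..Suc n}"
    and top: "Suc n \<in> set (x # xs)"
    unfolding multisets_seq_def by (cases ls) auto
  have "x = Suc n"
    using sorted bounded top by auto
  then show "ls \<in> (#) (Suc n) ` multisets_seq (Suc n) k"
    using ls \<open>length xs = k\<close> sorted bounded by (auto simp: multisets_seq_def)
qed (auto simp: multisets_seq_def subset_iff)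

lemma hd_eq_top_iff_mem_multisets_seq:
  "xs \<in> multisets_seq (Suc n) k \<Longrightarrow> (xs \<noteq> [] \<and> hd xs = Suc n) \<longleftrightarrow> Suc n \<in> set xs"
  by (cases xs) (auto simp: multisets_seq_def)

definition theta_top :: "(nat \<Rightarrow> real) \<Rightarrow> nat \<Rightarrow> nat \<Rightarrow> real \<Rightarrow> real" where
  "theta_top a n k t =
     (\<Sum>ls\<in>{ls \<in> multisets_seq (Suc n) k. Suc n \<in> set ls}. weight a ls * t ^ sigma_eq ls)"

lemma theta_Suc: "theta a (Suc n) k t = theta a n k t + theta_top a n k t"
  unfolding theta_def theta_top_def sum_multisets_seq_Suc by simp

lemma theta_top_0: "theta_top a n 0 t = 0"
proof -
  have empty: "{ls \<in> multisets_seq (Suc n) 0. Suc n \<in> set ls} = {}"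
    by (simp add: multisets_seq_0_right)
  show ?thesis
    unfolding theta_top_def empty by simp
qed

lemma theta_top_Suc: "theta_top a n (Suc k) t = a (Suc n) * (t * theta_top a n k t + theta a n k t)"
proof -
  let ?f = "\<lambda>ls. weight a ls * t ^ sigma_eq ls"
  have "theta_top a n (Suc k) t = (\<Sum>ls\<in>multisets_seq (Suc n) k. ?f (Suc n # ls))"
    unfolding theta_top_def multisets_seq_Suc_containing_top
    by (subst sum.reindex) (auto simp: inj_on_def)
  also have "\<dots> = a (Suc n) * (\<Sum>ls\<in>multisets_seq (Suc n) k. ?f ls * (if Suc n \<in> set ls then t else 1))"
    by (auto simp: sum_distrib_left weight_def sigma_eq_Cons hd_eq_top_iff_mem_multisets_seq
        intro!: sum.cong)
  also have "(\<Sum>ls\<in>multisets_seq (Suc n) k. ?f ls * (if Suc n \<in> set ls then t else 1))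
      = t * theta_top a n k t + theta a n k t"
    unfolding sum_multisets_seq_Suc theta_top_def theta_def sum_distrib_left
    by (intro arg_cong2[where f = "(+)"] sum.cong) (auto simp: multisets_seq_def)
  finally show ?thesis .
qed

definition geom_fps :: "'a::comm_ring_1 \<Rightarrow> 'a fps" where
  "geom_fps c = Abs_fps (\<lambda>k. c ^ k)"

lemma geom_fps_inverse_mult: "(1 - fps_const c * fps_X) * geom_fps c = 1"
proof (rule fps_ext)
  fix k
  have "((1 - fps_const c * fps_X) * geom_fps c) $ k = geom_fps c $ k - c * (fps_X * geom_fps c) $ k"
    by (simp add: algebra_simps mult.assoc)
  also have "\<dots> = 1 $ k"
    by (cases k) (auto simp: geom_fps_def)
  finally show "((1 - fps_const c * fps_X) * geom_fps c) $ k = 1 $ k" .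
qed

lemma inverse_one_minus_const_X: "inverse (1 - fps_const (c::'a::field) * fps_X) = geom_fps c"
  by (rule fps_inverse_unique) (rule geom_fps_inverse_mult)

lemma fps_deriv_geom_fps: "fps_deriv (geom_fps c) = fps_const c * geom_fps c ^ 2"
proof -
  have "fps_deriv ((1 - fps_const c * fps_X) * geom_fps c) = 0"
    by (simp only: geom_fps_inverse_mult fps_deriv_1)
  then have deriv: "(1 - fps_const c * fps_X) * fps_deriv (geom_fps c) = fps_const c * geom_fps c"
    by (simp add: algebra_simps)
  have "fps_deriv (geom_fps c) = (geom_fps c * (1 - fps_const c * fps_X)) * fps_deriv (geom_fps c)"
    using geom_fps_inverse_mult[of c] by (simp add: mult.commute)
  also have "\<dots> = geom_fps c * (fps_const c * geom_fps c)"
    by (simp add: mult.assoc deriv)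
  finally show ?thesis
    by (simp add: power2_eq_square algebra_simps)
qed

lemma one_plus_X_geom_fps_factor:
  "1 + fps_const \<alpha> * fps_X * geom_fps (\<alpha> * t) =
     (1 - fps_const (\<alpha> * (t - 1)) * fps_X) * geom_fps (\<alpha> * t)"
proof -
  have "1 - fps_const (\<alpha> * (t - 1)) * fps_X = (1 - fps_const (\<alpha> * t) * fps_X) + fps_const \<alpha> * fps_X"
    by (simp add: algebra_simps)
  then show ?thesis
    by (simp only: distrib_right geom_fps_inverse_mult)
qed

lemma Theta_0: "Theta a 0 t = 1"
  by (rule fps_ext) (simp add: Theta_def theta_def multisets_seq_0_left weight_def)

lemma Theta_nth_0: "Theta a n t $ 0 = 1"
  by (simp add: Theta_def theta_def multisets_seq_0_right weight_def)

lemma Theta_Suc: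
  "Theta a (Suc n) t = Theta a n t * (1 + fps_const (a (Suc n)) * fps_X * geom_fps (a (Suc n) * t))"
proof -
  define H where "H = Abs_fps (\<lambda>k. theta_top a n k t)"
  define \<alpha> where "\<alpha> = a (Suc n)"
  have rec: "H = fps_const \<alpha> * (fps_X * (fps_const t * H + Theta a n t))"
  proof (rule fps_ext)
    fix k show "H $ k = (fps_const \<alpha> * (fps_X * (fps_const t * H + Theta a n t))) $ k"
      by (cases k) (simp_all add: H_def theta_top_0 theta_top_Suc Theta_def \<alpha>_def)
  qed
  have "(1 - fps_const (\<alpha> * t) * fps_X) * H = H - fps_const \<alpha> * fps_X * fps_const t * H"
    by (simp add: algebra_simps)
  also have "\<dots> = fps_const \<alpha> * fps_X * Theta a n t"
    by (subst (1) rec) (simp add: algebra_simps)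
  finally have denominator: "(1 - fps_const (\<alpha> * t) * fps_X) * H = fps_const \<alpha> * fps_X * Theta a n t" .
  have "H = ((1 - fps_const (\<alpha> * t) * fps_X) * geom_fps (\<alpha> * t)) * H"
    by (simp add: geom_fps_inverse_mult)
  also have "\<dots> = geom_fps (\<alpha> * t) * ((1 - fps_const (\<alpha> * t) * fps_X) * H)"
    by (simp only: ac_simps)
  also have "\<dots> = geom_fps (\<alpha> * t) * (fps_const \<alpha> * fps_X * Theta a n t)"
    by (simp only: denominator)
  finally have "H = geom_fps (\<alpha> * t) * (fps_const \<alpha> * fps_X * Theta a n t)" .
  moreover have "Theta a (Suc n) t = Theta a n t + H"
    by (rule fps_ext) (simp add: Theta_def H_def theta_Suc)
  ultimately show ?thesis
    by (simp add: \<alpha>_def algebra_simps)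
qed

lemma Theta_eq_prod: "Theta a n t = (\<Prod>m=1..n. 1 + fps_const (a m) * fps_X * geom_fps (a m * t))"
  by (induction n) (simp_all add: Theta_0 Theta_Suc prod.nat_ivl_Suc' mult.commute)

lemma fps_deriv_one_plus_X_geom_fps:
  "fps_deriv (1 + fps_const \<alpha> * fps_X * geom_fps (\<alpha> * t)) =
     (1 + fps_const \<alpha> * fps_X * geom_fps (\<alpha> * t)) *
     (fps_const (\<alpha> * t) * geom_fps (\<alpha> * t) - fps_const (\<alpha> * (t - 1)) * geom_fps (\<alpha> * (t - 1)))"
proof -
  define g where "g = geom_fps (\<alpha> * t)"
  define h where "h = geom_fps (\<alpha> * (t - 1))"
  define u where "u = 1 - fps_const (\<alpha> * (t - 1)) * fps_X"
  have factor: "1 + fps_const \<alpha> * fps_X * g = u * g"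
    unfolding g_def u_def by (rule one_plus_X_geom_fps_factor)
  have uh: "u * h = 1"
    unfolding u_def h_def by (rule geom_fps_inverse_mult)
  have "fps_deriv (u * g) = u * (fps_const (\<alpha> * t) * g * g) - fps_const (\<alpha> * (t - 1)) * g"
    by (simp add: u_def g_def fps_deriv_geom_fps power2_eq_square algebra_simps)
  also have "\<dots> = u * g * (fps_const (\<alpha> * t) * g) - fps_const (\<alpha> * (t - 1)) * g * (u * h)"
    unfolding uh by (simp add: ac_simps)
  also have "\<dots> = u * g * (fps_const (\<alpha> * t) * g - fps_const (\<alpha> * (t - 1)) * h)"
    by (simp add: algebra_simps)
  finally show ?thesis
    by (simp only: factor flip: g_def h_def)
qed

lemma fps_deriv_prod_log_deriv:
  fixes f g :: "'b \<Rightarrow> 'a::comm_ring_1 fps"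
  assumes "finite S" and "\<And>m. m \<in> S \<Longrightarrow> fps_deriv (f m) = f m * g m"
  shows "fps_deriv (\<Prod>m\<in>S. f m) = (\<Prod>m\<in>S. f m) * (\<Sum>m\<in>S. g m)"
  using assms by (induction S rule: finite_induct) (auto simp: algebra_simps)

lemma fps_eq_exp_compose_if_log_deriv:
  fixes Y L :: "'a::field_char_0 fps"
  assumes Y0: "Y $ 0 = 1" and L0: "L $ 0 = 0" and deriv: "fps_deriv Y = Y * fps_deriv L"
  shows "Y = fps_exp 1 oo L"
proof -
  define E where "E = fps_exp 1 oo L"
  have "fps_deriv (E * inverse Y) = E * fps_deriv L * inverse Y - E * (Y * inverse Y) * fps_deriv L * inverse Y"
    by (simp add: E_def fps_compose_deriv[OF L0] fps_inverse_deriv Y0 deriv power2_eq_square algebra_simps)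
  also have "\<dots> = 0"
    by (simp add: inverse_mult_eq_1' Y0)
  finally have "E * inverse Y = fps_const ((E * inverse Y) $ 0)"
    by (simp only: fps_deriv_eq_0_iff)
  also have "(E * inverse Y) $ 0 = 1"
    by (simp add: E_def Y0)
  finally have "E * inverse Y * Y = Y"
    by simp
  then show ?thesis
    by (simp add: E_def mult.assoc inverse_mult_eq_1 Y0)
qed

definition Theta_log :: "(nat \<Rightarrow> real) \<Rightarrow> nat \<Rightarrow> real \<Rightarrow> real fps" where
  "Theta_log a n t = Abs_fps (\<lambda>j. if j = 0 then 0 else powsum a n j * (t ^ j - (t - 1) ^ j) / real j)"

lemma fps_deriv_Theta_log:
  "fps_deriv (Theta_log a n t) =
     (\<Sum>m=1..n. fps_const (a m * t) * geom_fps (a m * t) - fps_const (a m * (t - 1)) * geom_fps (a m * (t - 1)))"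
proof (rule fps_ext)
  fix k
  have "fps_deriv (Theta_log a n t) $ k = powsum a n (Suc k) * (t ^ Suc k - (t - 1) ^ Suc k)"
    by (simp add: Theta_log_def del: of_nat_Suc)
  also have "\<dots> = (\<Sum>m=1..n. (a m * t) * (a m * t) ^ k - (a m * (t - 1)) * (a m * (t - 1)) ^ k)"
    unfolding powsum_def sum_distrib_right
    by (intro sum.cong refl) (simp only: power_mult_distrib power_Suc, simp add: algebra_simps)
  finally show "fps_deriv (Theta_log a n t) $ k =
      (\<Sum>m=1..n. fps_const (a m * t) * geom_fps (a m * t)
         - fps_const (a m * (t - 1)) * geom_fps (a m * (t - 1))) $ k"
    by (simp add: fps_sum_nth geom_fps_def)
qed

lemma Theta_eq_exp_Theta_log: "Theta a n t = fps_exp 1 oo Theta_log a n t"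
proof (rule fps_eq_exp_compose_if_log_deriv)
  show "Theta a n t $ 0 = 1"
    by (rule Theta_nth_0)
  show "Theta_log a n t $ 0 = 0"
    by (simp add: Theta_log_def)
  show "fps_deriv (Theta a n t) = Theta a n t * fps_deriv (Theta_log a n t)"
    unfolding Theta_eq_prod fps_deriv_Theta_log
    by (rule fps_deriv_prod_log_deriv[OF finite_atLeastAtMost fps_deriv_one_plus_X_geom_fps])
qed

lemma fps_of_poly_one_minus_const_X: "fps_of_poly [:1, - c:] = 1 - fps_const (c::'a::comm_ring_1) * fps_X"
  by (simp add: fps_of_poly_pCons fps_const_neg[symmetric] algebra_simps del: fps_const_neg)

lemma inverse_const_X_minus_const:
  fixes b t :: "'a::field"
  assumes "b \<noteq> 0"
  shows "inverse (fps_const t * fps_X - fps_const (1 / b)) = fps_const (- b) * geom_fps (b * t)"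
proof (rule fps_inverse_unique)
  have "(fps_const t * fps_X - fps_const (1 / b)) * fps_const (- b) = 1 - fps_const (b * t) * fps_X"
    using assms by (simp add: algebra_simps flip: fps_const_mult)
  then show "(fps_const t * fps_X - fps_const (1 / b)) * (fps_const (- b) * geom_fps (b * t)) = 1"
    by (metis mult.assoc geom_fps_inverse_mult)
qed

lemma common_denominator_geom_fps:
  fixes c w :: "'b \<Rightarrow> 'a::comm_ring_1"
  assumes "finite S"
  shows "fps_const C + (\<Sum>j\<in>S. fps_const (w j) * geom_fps (c j)) =
     fps_of_poly (smult C (\<Prod>m\<in>S. [:1, - c m:]) + (\<Sum>j\<in>S. smult (w j) (\<Prod>m\<in>S-{j}. [:1, - c m:])))
       * (\<Prod>m\<in>S. geom_fps (c m))"
proof -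
  have cancel: "fps_of_poly (\<Prod>m\<in>T. [:1, - c m:]) * (\<Prod>m\<in>T. geom_fps (c m)) = 1" for T
    by (simp add: fps_of_poly_prod fps_of_poly_one_minus_const_X geom_fps_inverse_mult flip: prod.distrib)
  have single: "fps_of_poly (\<Prod>m\<in>S-{j}. [:1, - c m:]) * (\<Prod>m\<in>S. geom_fps (c m)) = geom_fps (c j)"
    if "j \<in> S" for j
  proof -
    have "(\<Prod>m\<in>S. geom_fps (c m)) = geom_fps (c j) * (\<Prod>m\<in>S-{j}. geom_fps (c m))"
      using assms that by (simp add: prod.remove)
    then show ?thesis
      using cancel[of "S - {j}"] by (simp add: ac_simps)
  qed
  show ?thesis
    by (simp add: fps_of_poly_add fps_of_poly_sum fps_of_poly_smult distrib_right sum_distrib_right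
        mult.assoc cancel single)
qed

lemma poly_sum_smult_prod_remove_linear:
  fixes c w :: "'b \<Rightarrow> 'a::field"
  assumes "finite S" and "j \<in> S" and "c j \<noteq> 0"
  shows "poly (\<Sum>i\<in>S. smult (w i) (\<Prod>m\<in>S-{i}. [:1, - c m:])) (1 / c j) = w j * (\<Prod>m\<in>S-{j}. 1 - c m / c j)"
proof -
  have "poly (\<Prod>m\<in>S-{i}. [:1, - c m:]) (1 / c j) = 0" if "i \<in> S - {j}" for i
    using assms that by (auto simp: poly_prod prod_zero_iff intro!: bexI[of _ j])
  then have "poly (\<Sum>i\<in>S. smult (w i) (\<Prod>m\<in>S-{i}. [:1, - c m:])) (1 / c j)
      = w j * poly (\<Prod>m\<in>S-{j}. [:1, - c m:]) (1 / c j)"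
    using assms by (simp add: poly_sum sum.remove)
  also have "\<dots> = w j * (\<Prod>m\<in>S-{j}. 1 - c m / c j)"
    by (simp add: poly_prod)
  finally show ?thesis .
qed

lemma degree_coeff_prod_linear:
  fixes c :: "'b \<Rightarrow> 'a::comm_ring_1"
  assumes "finite S"
  shows "degree (\<Prod>m\<in>S. [:1, - c m:]) \<le> card S \<and> coeff (\<Prod>m\<in>S. [:1, - c m:]) (card S) = (\<Prod>m\<in>S. - c m)"
  using assms
proof (induction S rule: finite_induct)
  case (insert x S)
  define P where "P = (\<Prod>m\<in>S. [:1, - c m:])"
  have "degree P \<le> card S" and coeff_P: "coeff P (card S) = (\<Prod>m\<in>S. - c m)"
    using insert by (simp_all add: P_def)
  have "(\<Prod>m\<in>insert x S. [:1, - c m:]) = P + pCons 0 (smult (- c x) P)"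
    using insert by (simp add: P_def)
  moreover have "degree (P + pCons 0 (smult (- c x) P)) \<le> Suc (card S)"
    using \<open>degree P \<le> card S\<close> degree_smult_le[of "- c x" P]
    by (intro order.trans[OF degree_add_le_max]) (auto intro: order.trans[OF degree_pCons_le])
  moreover have "coeff (P + pCons 0 (smult (- c x) P)) (Suc (card S)) = - c x * (\<Prod>m\<in>S. - c m)"
    using \<open>degree P \<le> card S\<close> coeff_P by (simp add: coeff_eq_0)
  ultimately show ?case
    using insert by simp
qed simp

lemma prod_one_minus_ratio:
  fixes a :: "'b \<Rightarrow> 'a::field"
  assumes "finite S" and "j \<in> S" and "\<forall>m\<in>S. a m \<noteq> 0"
  shows "(\<Prod>m\<in>S-{j}. 1 - a m / a j) = (-1) ^ (card S - 1) * (\<Prod>m\<in>S-{j}. a m) * (\<Prod>l\<in>S-{j}. 1 / a j - 1 / a l)"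
proof -
  have "(\<Prod>m\<in>S-{j}. 1 - a m / a j) = (\<Prod>m\<in>S-{j}. (-1) * (a m * (1 / a j - 1 / a m)))"
    using assms by (intro prod.cong refl) (auto simp: field_simps)
  also have "\<dots> = (-1) ^ (card S - 1) * (\<Prod>m\<in>S-{j}. a m) * (\<Prod>l\<in>S-{j}. 1 / a j - 1 / a l)"
    by (simp only: prod.distrib) (simp add: assms card_Diff_singleton mult.assoc)
  finally show ?thesis .
qed

definition Theta_residue :: "(nat \<Rightarrow> real) \<Rightarrow> nat \<Rightarrow> real \<Rightarrow> nat \<Rightarrow> real" where
  "Theta_residue a n t j =
     (-1) ^ n * (\<Prod>m=1..n. (1 - t) / (a j * t) + 1 / a m) / (\<Prod>l\<in>{1..n} - {j}. 1 / a j - 1 / a l)"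

lemma Theta_eq_numerator_mult_prod_geom_fps:
  "Theta a n t = fps_of_poly (\<Prod>m=1..n. [:1, - (a m * (t - 1)):]) * (\<Prod>m=1..n. geom_fps (a m * t))"
  unfolding Theta_eq_prod fps_of_poly_prod prod.distrib[symmetric]
  by (simp add: one_plus_X_geom_fps_factor fps_of_poly_one_minus_const_X)

lemma Theta_numerator_eval:
  fixes a :: "nat \<Rightarrow> real"
  assumes n: "n \<ge> 1" and a: "\<forall>m\<in>{1..n}. a m \<noteq> 0" and t: "t \<noteq> 0" and inj: "inj_on a {1..n}"
    and j: "j \<in> {1..n}"
  shows "poly (\<Prod>m=1..n. [:1, - (a m * (t - 1)):]) (1 / (a j * t)) =
     poly (smult ((t - 1) ^ n / t ^ n) (\<Prod>m=1..n. [:1, - (a m * t):])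
       + (\<Sum>i=1..n. smult (- a i * Theta_residue a n t i) (\<Prod>m\<in>{1..n}-{i}. [:1, - (a m * t):])))
       (1 / (a j * t))"
proof -
  define N where "N = (\<Prod>m=1..n. (1 - t) / (a j * t) + 1 / a m)"
  define D where "D = (\<Prod>l\<in>{1..n} - {j}. 1 / a j - 1 / a l)"
  define P where "P = (\<Prod>m\<in>{1..n} - {j}. a m)"
  have "D \<noteq> 0"
    using a j inj_onD[OF inj] unfolding D_def by (auto simp: prod_zero_iff)
  have sign: "(-1::real) ^ n = - ((-1) ^ (n - 1))"
    using n by (cases n) auto
  have "poly (\<Prod>m=1..n. [:1, - (a m * (t - 1)):]) (1 / (a j * t)) = (\<Prod>m=1..n. a m * ((1 - t) / (a j * t) + 1 / a m))"
    unfolding poly_prod using a j t by (intro prod.cong refl) (auto simp: field_simps)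
  also have "\<dots> = a j * P * N"
    using j by (simp add: prod.distrib N_def P_def prod.remove)
  finally have lhs: "poly (\<Prod>m=1..n. [:1, - (a m * (t - 1)):]) (1 / (a j * t)) = a j * P * N" .
  have "poly (\<Prod>m=1..n. [:1, - (a m * t):]) (1 / (a j * t)) = 0"
    using a j t by (auto simp: poly_prod prod_zero_iff intro!: bexI[of _ j])
  then have "poly (smult ((t - 1) ^ n / t ^ n) (\<Prod>m=1..n. [:1, - (a m * t):])
       + (\<Sum>i=1..n. smult (- a i * Theta_residue a n t i) (\<Prod>m\<in>{1..n}-{i}. [:1, - (a m * t):])))
       (1 / (a j * t))
      = - a j * Theta_residue a n t j * (\<Prod>m\<in>{1..n}-{j}. 1 - a m * t / (a j * t))"
    using poly_sum_smult_prod_remove_linear[of "{1..n}" j "\<lambda>m. a m * t" "\<lambda>i. - a i * Theta_residue a n t i"] a j t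
    by simp
  also have "\<dots> = - a j * ((-1) ^ n * N / D) * ((-1) ^ (n - 1) * P * D)"
    using prod_one_minus_ratio[of "{1..n}" j a] a j t
    by (simp add: Theta_residue_def N_def D_def P_def)
  also have "\<dots> = a j * P * N"
    using \<open>D \<noteq> 0\<close> by (simp add: sign field_simps)
  finally show ?thesis
    using lhs by simp
qed

lemma Theta_numerator_eq:
  fixes a :: "nat \<Rightarrow> real"
  assumes n: "n \<ge> 1" and a: "\<forall>m\<in>{1..n}. a m \<noteq> 0" and t: "t \<noteq> 0" and inj: "inj_on a {1..n}"
  shows "(\<Prod>m=1..n. [:1, - (a m * (t - 1)):]) =
     smult ((t - 1) ^ n / t ^ n) (\<Prod>m=1..n. [:1, - (a m * t):])
     + (\<Sum>j=1..n. smult (- a j * Theta_residue a n t j) (\<Prod>m\<in>{1..n}-{j}. [:1, - (a m * t):]))"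
    (is "?p = ?q")
proof (rule poly_eqI_degree_lead_coeff[where n = n and A = "(\<lambda>j. 1 / (a j * t)) ` {1..n}"])
  let ?Q = "\<lambda>j. \<Prod>m\<in>{1..n}-{j}. [:1, - (a m * t):]"
  have "degree (?Q j) \<le> n - 1" if "j \<in> {1..n}" for j
    using degree_coeff_prod_linear[of "{1..n} - {j}" "\<lambda>m. a m * t"] that by simp
  then have deg_sum: "degree (\<Sum>j=1..n. smult (- a j * Theta_residue a n t j) (?Q j)) \<le> n - 1"
    by (intro degree_sum_le) (auto intro: order.trans[OF degree_smult_le])
  have deg_prod: "degree (\<Prod>m=1..n. [:1, - (a m * t):]) \<le> n"
    using degree_coeff_prod_linear[of "{1..n}" "\<lambda>m. a m * t"] by simp
  show "degree ?q \<le> n"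
    using deg_sum deg_prod degree_smult_le[of "(t - 1) ^ n / t ^ n" "\<Prod>m=1..n. [:1, - (a m * t):]"]
    by (intro order.trans[OF degree_add_le_max]) auto
  show "degree ?p \<le> n"
    using degree_coeff_prod_linear[of "{1..n}" "\<lambda>m. a m * (t - 1)"] by simp
  have factor_out: "(\<Prod>m=1..n. - (a m * x)) = (\<Prod>m=1..n. - a m) * x ^ n" for x :: real
  proof -
    have "(\<Prod>m=1..n. - (a m * x)) = (\<Prod>m=1..n. - a m * x)"
      by simp
    then show ?thesis
      by (simp only: prod.distrib) simp
  qed
  have "coeff ?p n = (\<Prod>m=1..n. - (a m * (t - 1)))"
    using degree_coeff_prod_linear[of "{1..n}" "\<lambda>m. a m * (t - 1)"] by simp
  also have "\<dots> = (t - 1) ^ n / t ^ n * (\<Prod>m=1..n. - (a m * t))"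
    using t by (simp only: factor_out) simp
  also have "\<dots> = coeff ?q n"
  proof -
    have "coeff (\<Sum>j=1..n. smult (- a j * Theta_residue a n t j) (?Q j)) n = 0"
      by (rule coeff_eq_0) (use deg_sum n in linarith)
    moreover have "coeff (\<Prod>m=1..n. [:1, - (a m * t):]) n = (\<Prod>m=1..n. - (a m * t))"
      using degree_coeff_prod_linear[of "{1..n}" "\<lambda>m. a m * t"] by simp
    ultimately show ?thesis
      by (simp only: coeff_add coeff_smult)
  qed
  finally show "coeff ?p n = coeff ?q n" .
  have "inj_on (\<lambda>j. 1 / (a j * t)) {1..n}"
  proof (rule inj_onI)
    fix i j assume "i \<in> {1..n}" "j \<in> {1..n}" "1 / (a i * t) = 1 / (a j * t)"
    then show "i = j"
      using t inj_onD[OF inj] by simp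
  qed
  then show "card ((\<lambda>j. 1 / (a j * t)) ` {1..n}) \<ge> n"
    by (simp add: card_image)
  fix z assume "z \<in> (\<lambda>j. 1 / (a j * t)) ` {1..n}"
  then obtain j where j: "j \<in> {1..n}" and z: "z = 1 / (a j * t)"
    by blast
  show "poly ?p z = poly ?q z"
    using Theta_numerator_eval[OF n a t inj j] z by simp
qed

lemma Theta_partial_fractions:
  fixes a :: "nat \<Rightarrow> real"
  assumes n: "n \<ge> 1" and a: "\<forall>m\<in>{1..n}. a m \<noteq> 0" and t: "t \<noteq> 0" and inj: "inj_on a {1..n}"
  shows "Theta a n t = fps_const ((t - 1) ^ n / t ^ n)
     + (\<Sum>j=1..n. fps_const (Theta_residue a n t j) * inverse (fps_const t * fps_X - fps_const (1 / a j)))"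
proof -
  have "Theta a n t = fps_of_poly (\<Prod>m=1..n. [:1, - (a m * (t - 1)):]) * (\<Prod>m=1..n. geom_fps (a m * t))"
    by (rule Theta_eq_numerator_mult_prod_geom_fps)
  also have "\<dots> = fps_of_poly (smult ((t - 1) ^ n / t ^ n) (\<Prod>m=1..n. [:1, - (a m * t):])
      + (\<Sum>j=1..n. smult (- a j * Theta_residue a n t j) (\<Prod>m\<in>{1..n}-{j}. [:1, - (a m * t):])))
      * (\<Prod>m=1..n. geom_fps (a m * t))"
    by (simp only: Theta_numerator_eq[OF n a t inj])
  also have "\<dots> = fps_const ((t - 1) ^ n / t ^ n)
      + (\<Sum>j=1..n. fps_const (- a j * Theta_residue a n t j) * geom_fps (a j * t))"
    by (rule common_denominator_geom_fps[symmetric]) simp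
  also have "(\<Sum>j=1..n. fps_const (- a j * Theta_residue a n t j) * geom_fps (a j * t))
      = (\<Sum>j=1..n. fps_const (Theta_residue a n t j) * inverse (fps_const t * fps_X - fps_const (1 / a j)))"
  proof (intro sum.cong refl)
    fix j assume "j \<in> {1..n}"
    then have "a j \<noteq> 0"
      using a by blast
    then show "fps_const (- a j * Theta_residue a n t j) * geom_fps (a j * t)
        = fps_const (Theta_residue a n t j) * inverse (fps_const t * fps_X - fps_const (1 / a j))"
      by (simp add: inverse_const_X_minus_const)
  qed
  finally show ?thesis .
qed

theorem mainTheorem1:
  fixes a :: "nat \<Rightarrow> real" and n :: nat and t :: real
  assumes "n \<ge> 1" and "\<And>m. m \<in> {1..n} \<Longrightarrow> a m > 0"
  shows "Theta a n t =
           (\<Prod>m=1..n. 1 + fps_const (a m) * fps_X * inverse (1 - fps_const (a m * t) * fps_X))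
       \<and> Theta a n t =
           fps_exp 1 oo Abs_fps (\<lambda>j. if j = 0 then 0
                                   else powsum a n j * (t ^ j - (t - 1) ^ j) / real j)
       \<and> (t \<noteq> 0 \<and> inj_on a {1..n} \<longrightarrow>
           Theta a n t =
             fps_const ((t - 1) ^ n / t ^ n)
             + (\<Sum>j=1..n. fps_const ((-1) ^ n *
                   (\<Prod>m=1..n. (1 - t) / (a j * t) + 1 / a m) /
                   (\<Prod>l\<in>{1..n} - {j}. 1 / a j - 1 / a l))
                 * inverse (fps_const t * fps_X - fps_const (1 / a j))))"
proof (intro conjI impI)
  show "Theta a n t =
      (\<Prod>m=1..n. 1 + fps_const (a m) * fps_X * inverse (1 - fps_const (a m * t) * fps_X))"
    by (simp add: Theta_eq_prod inverse_one_minus_const_X)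
  show "Theta a n t =
      fps_exp 1 oo Abs_fps (\<lambda>j. if j = 0 then 0 else powsum a n j * (t ^ j - (t - 1) ^ j) / real j)"
    using Theta_eq_exp_Theta_log by (simp add: Theta_log_def)
  have "\<forall>m\<in>{1..n}. a m \<noteq> 0"
    using assms(2) by force
  moreover assume "t \<noteq> 0 \<and> inj_on a {1..n}"
  ultimately show "Theta a n t =
      fps_const ((t - 1) ^ n / t ^ n)
      + (\<Sum>j=1..n. fps_const ((-1) ^ n * (\<Prod>m=1..n. (1 - t) / (a j * t) + 1 / a m) /
            (\<Prod>l\<in>{1..n} - {j}. 1 / a j - 1 / a l))
          * inverse (fps_const t * fps_X - fps_const (1 / a j)))"
    using Theta_partial_fractions[OF assms(1)] by (simp add: Theta_residue_def)
qed

end
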